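(* Let $\mathbf{a}=(a_n)_{n\geq 1}$ be a strong divisibility sequence. Then for every positive integer $n$, \[\mathrm{lcm}(a_1,a_2,\dots,a_n)=\gcd\left\{\binom{n}{k}_{\mathbf{a}}\,\mathrm{lcm}(a_1,\dots,a_k)\;:\; k\in\mathbb{N},\ n/2\leq k\leq n\right\}.\]
   Context: A strong divisibility sequence is a sequence of positive integers $(a_n)_{n\geq1}$ such that $\gcd(a_n,a_m)=a_{\gcd(n,m)}$ for all positive integers $n,m$. For integers $0\leq k\leq n$, the $\mathbf{a}$-binomial coefficient is $\binom{n}{k}_{\mathbf{a}}:=\frac{a_na_{n-1}\cdots a_{n-k+1}}{a_1a_2\cdots a_k}$ (empty products equal $1$); for a strong divisibility sequence these are positive integers. *)

theory Defs
  imports Main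
begin

definition strong_divisibility_seq :: "(nat \<Rightarrow> nat) \<Rightarrow> bool" where
  "strong_divisibility_seq a \<longleftrightarrow>
     (\<forall>n\<ge>1. a n > 0) \<and> (\<forall>n\<ge>1. \<forall>m\<ge>1. gcd (a n) (a m) = a (gcd n m))"

text \<open>a-binomial coefficient (a_n ... a_{n-k+1}) / (a_1 ... a_k); for strong divisibility
 sequences the quotient is an integer, so natural-number division is exact.\<close>
definition a_binom :: "(nat \<Rightarrow> nat) \<Rightarrow> nat \<Rightarrow> nat \<Rightarrow> nat" where
  "a_binom a n k = (\<Prod>i\<in>{n-k<..n}. a i) div (\<Prod>i\<in>{1..k}. a i)"

end

theory Submission
  imports Defs "HOL-Computational_Algebra.Primes"
begin

text \<open>By strong divisibility, the indices \<open>i \<ge> 1\<close> with \<open>q dvd a i\<close> are exactly the multiples of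
  a single \<open>r\<close>, so a window \<open>{m<..n}\<close> contains \<open>n div r - m div r\<close> of them. Since the
  \<open>p\<close>-adic valuation of a product of positive numbers is the sum over \<open>e \<ge> 1\<close> of the number of
  factors divisible by \<open>p ^ e\<close>, divisibilities between such products reduce to floor
  inequalities, one prime power at a time. This shows that the \<open>a\<close>-binomial coefficient is
  exact and that every \<open>a i\<close> with \<open>i \<le> n\<close> divides each member of the set when
  \<open>n \<le> 2 * k\<close>; conversely the member for \<open>k = n\<close> is \<open>Lcm (a ` {1..n})\<close> itself.\<close>

lemma multiplicity_eq_card_prime_powers_dvd:
  fixes x :: nat
  assumes "prime p" "x \<noteq> 0" "multiplicity p x \<le> M"
  shows "multiplicity p x = card {e\<in>{1..M}. p ^ e dvd x}"
proof -
  have "\<not> is_unit p"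
    using assms(1) not_prime_unit by blast
  then have "{e\<in>{1..M}. p ^ e dvd x} = {1..multiplicity p x}"
    using assms(2,3) by (auto simp: power_dvd_iff_le_multiplicity)
  then show ?thesis by simp
qed

lemma multiplicity_prod_mset_eq_sum_count_dvd:
  fixes X :: "nat multiset"
  assumes p: "prime p" and "0 \<notin># X" and "\<forall>z\<in>#X. multiplicity p z \<le> M"
  shows "multiplicity p (\<Prod>\<^sub># X) = (\<Sum>e\<in>{1..M}. size {#z \<in># X. p ^ e dvd z#})"
  using assms(2,3)
proof (induction X)
  case empty
  then show ?case by simp
next
  case (add z X)
  have size_filter_add_mset: "size {#y \<in># add_mset z X. p ^ e dvd y#}
      = (if p ^ e dvd z then 1 else 0) + size {#y \<in># X. p ^ e dvd y#}" for e
    by simp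
  have "multiplicity p (\<Prod>\<^sub># (add_mset z X)) = multiplicity p z + multiplicity p (\<Prod>\<^sub># X)"
    using add.prems p by (simp add: prime_elem_multiplicity_mult_distrib)
  also have "multiplicity p z = card {e\<in>{1..M}. p ^ e dvd z}"
    using add.prems p by (intro multiplicity_eq_card_prime_powers_dvd) auto
  also have "\<dots> = (\<Sum>e\<in>{1..M}. if p ^ e dvd z then 1 else 0)"
    by (simp add: sum.If_cases Int_def conj_commute)
  finally show ?case
    unfolding size_filter_add_mset sum.distrib using add by simp
qed

lemma prod_mset_dvd_if_count_prime_power_dvd_le:
  fixes X Y :: "nat multiset"
  assumes "0 \<notin># X" "0 \<notin># Y"
    and count_le: "\<And>p e. prime p \<Longrightarrow> e > 0 \<Longrightarrow>
      size {#z \<in># X. p ^ e dvd z#} \<le> size {#z \<in># Y. p ^ e dvd z#}"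
  shows "\<Prod>\<^sub># X dvd \<Prod>\<^sub># Y"
proof (rule multiplicity_le_imp_dvd)
  show "\<Prod>\<^sub># X \<noteq> 0" using assms(1) by simp
  fix p :: nat assume p: "prime p"
  define M where "M = multiplicity p (\<Prod>\<^sub># X) + multiplicity p (\<Prod>\<^sub># Y)"
  have bound: "\<forall>z\<in>#Z. multiplicity p z \<le> M"
    if "0 \<notin># Z" "multiplicity p (\<Prod>\<^sub># Z) \<le> M" for Z :: "nat multiset"
    using that by (metis dvd_imp_multiplicity_le dvd_prod_mset le_trans prod_mset_zero_iff)
  have "multiplicity p (\<Prod>\<^sub># X) = (\<Sum>e\<in>{1..M}. size {#z \<in># X. p ^ e dvd z#})"
    using assms(1) bound[OF assms(1)] by (intro multiplicity_prod_mset_eq_sum_count_dvd p) (auto simp: M_def)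
  also have "\<dots> \<le> (\<Sum>e\<in>{1..M}. size {#z \<in># Y. p ^ e dvd z#})"
    by (intro sum_mono count_le p) auto
  also have "\<dots> = multiplicity p (\<Prod>\<^sub># Y)"
    using assms(2) bound[OF assms(2)] by (intro multiplicity_prod_mset_eq_sum_count_dvd[symmetric] p) (auto simp: M_def)
  finally show "multiplicity p (\<Prod>\<^sub># X) \<le> multiplicity p (\<Prod>\<^sub># Y)" .
qed

lemma strong_divisibility_seq_nonzero:
  "strong_divisibility_seq a \<Longrightarrow> i > 0 \<Longrightarrow> a i \<noteq> 0"
  unfolding strong_divisibility_seq_def by (simp add: Suc_le_eq)

lemma strong_divisibility_seq_gcd:
  "strong_divisibility_seq a \<Longrightarrow> i \<ge> 1 \<Longrightarrow> j \<ge> 1 \<Longrightarrow> gcd (a i) (a j) = a (gcd i j)"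
  unfolding strong_divisibility_seq_def by auto

text \<open>\<open>r = 0\<close> encodes that \<open>q\<close> divides no term, as \<open>0 dvd i\<close> fails for \<open>i \<ge> 1\<close>.\<close>

lemma strong_divisibility_seq_dvd_iff_multiple:
  assumes sds: "strong_divisibility_seq a"
  obtains r where "\<And>i. i \<ge> 1 \<Longrightarrow> q dvd a i \<longleftrightarrow> r dvd i"
proof (cases "\<exists>i\<ge>1. q dvd a i")
  case False
  then show ?thesis by (intro that[of 0]) auto
next
  case True
  define r where "r = (LEAST i. i \<ge> 1 \<and> q dvd a i)"
  have r: "r \<ge> 1" "q dvd a r"
    unfolding r_def using LeastI_ex[OF True] by auto
  have r_least: "r \<le> i" if "i \<ge> 1" "q dvd a i" for i
    unfolding r_def using that by (simp add: Least_le)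
  show ?thesis
  proof (rule that, rule iffI)
    fix i :: nat assume i: "i \<ge> 1" "q dvd a i"
    have "q dvd a (gcd r i)"
      using i r by (simp flip: strong_divisibility_seq_gcd[OF sds])
    then have "r \<le> gcd r i"
      using i by (intro r_least) (simp_all add: Suc_le_eq)
    then show "r dvd i"
      using r(1) by (metis gcd_dvd2 gcd_le1_nat le_antisym not_one_le_zero)
  next
    fix i :: nat assume "i \<ge> 1" "r dvd i"
    then have "a r dvd a i"
      using r(1) by (metis gcd_nat.absorb1 gcd_dvd2 strong_divisibility_seq_gcd[OF sds])
    then show "q dvd a i" using r(2) by (rule dvd_trans[rotated])
  qed
qed

lemma card_multiples_greaterThanAtMost:
  fixes r :: nat
  assumes "m \<le> n"
  shows "card {i\<in>{m<..n}. r dvd i} = n div r - m div r"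
proof -
  have card_upto: "card {i\<in>{0<..n}. r dvd i} = n div r" for n
  proof (induction n)
    case (Suc n)
    have "{i\<in>{0<..Suc n}. r dvd i} =
        (if r dvd Suc n then insert (Suc n) {i\<in>{0<..n}. r dvd i} else {i\<in>{0<..n}. r dvd i})"
      by (auto simp: le_Suc_eq)
    then show ?case
      using Suc by (cases "r = 0") (auto simp: div_Suc dvd_eq_mod_eq_0)
  qed simp
  have "{i\<in>{m<..n}. r dvd i} = {i\<in>{0<..n}. r dvd i} - {i\<in>{0<..m}. r dvd i}"
    using assms by auto
  also have "card \<dots> = card {i\<in>{0<..n}. r dvd i} - card {i\<in>{0<..m}. r dvd i}"
    using assms by (intro card_Diff_subset) auto
  finally show ?thesis by (simp only: card_upto)
qed

lemma strong_divisibility_seq_count_dvd: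
  assumes "strong_divisibility_seq a"
  obtains r where "\<And>i. i \<ge> 1 \<Longrightarrow> q dvd a i \<longleftrightarrow> r dvd i"
    and "\<And>m n. m \<le> n \<Longrightarrow> card {j\<in>{m<..n}. q dvd a j} = n div r - m div r"
proof -
  obtain r where r: "\<And>i. i \<ge> 1 \<Longrightarrow> q dvd a i \<longleftrightarrow> r dvd i"
    using strong_divisibility_seq_dvd_iff_multiple[OF assms] by blast
  show ?thesis
  proof (rule that[OF r])
    fix m n :: nat assume "m \<le> n"
    have "{j\<in>{m<..n}. q dvd a j} = {j\<in>{m<..n}. r dvd j}"
      using r by (auto simp: Suc_le_eq)
    then show "card {j\<in>{m<..n}. q dvd a j} = n div r - m div r"
      using \<open>m \<le> n\<close> by (simp only: card_multiples_greaterThanAtMost)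
  qed
qed

lemma strong_divisibility_seq_count_dvd_le:
  assumes "strong_divisibility_seq a" "k \<le> n"
  shows "card {j\<in>{1..k}. q dvd a j} \<le> card {j\<in>{n-k<..n}. q dvd a j}"
proof -
  obtain r where "\<And>i. i \<ge> 1 \<Longrightarrow> q dvd a i \<longleftrightarrow> r dvd i"
    and count: "\<And>m n. m \<le> n \<Longrightarrow> card {j\<in>{m<..n}. q dvd a j} = n div r - m div r"
    using strong_divisibility_seq_count_dvd[OF assms(1), where q=q] by blast
  have "(n - k) div r + k div r \<le> (n - k + k) div r"
    by (subst div_add1_eq) (rule le_add1)
  then have "k div r \<le> n div r - (n - k) div r"
    using assms(2) by simp
  moreover have "{j\<in>{1..k}. q dvd a j} = {j\<in>{0<..k}. q dvd a j}"
    by auto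
  ultimately show ?thesis
    using count[of 0 k] count[of "n - k" n] assms(2) by simp
qed

lemma strong_divisibility_seq_count_dvd_le_Lcm:
  assumes sds: "strong_divisibility_seq a" and "n \<le> 2 * k" "k \<le> n" "1 \<le> i" "i \<le> n"
  shows "(if q dvd a i then 1 else 0) + card {j\<in>{1..k}. q dvd a j}
    \<le> card {j\<in>{n-k<..n}. q dvd a j} + (if q dvd Lcm (a ` {1..k}) then 1 else 0)"
proof -
  obtain r where r: "\<And>i. i \<ge> 1 \<Longrightarrow> q dvd a i \<longleftrightarrow> r dvd i"
    and count: "\<And>m n. m \<le> n \<Longrightarrow> card {j\<in>{m<..n}. q dvd a j} = n div r - m div r"
    using strong_divisibility_seq_count_dvd[OF sds, where q=q] by blast
  have le: "card {j\<in>{1..k}. q dvd a j} \<le> card {j\<in>{n-k<..n}. q dvd a j}"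
    using strong_divisibility_seq_count_dvd_le[OF sds \<open>k \<le> n\<close>] .
  consider "\<not> q dvd a i" | "q dvd Lcm (a ` {1..k})" | "q dvd a i" "k < r"
  proof (cases "q dvd a i \<and> r \<le> k")
    case True
    then have "r dvd i" using r \<open>1 \<le> i\<close> by blast
    then have "r \<ge> 1" using \<open>1 \<le> i\<close> by (cases "r = 0") auto
    then have "q dvd a r" using r by simp
    also have "a r dvd Lcm (a ` {1..k})" using \<open>r \<ge> 1\<close> True by simp
    finally show ?thesis using that by blast
  qed (use that in force)+
  then show ?thesis
  proof cases
    case 3
    then have "r dvd i" "r > 0" using r \<open>1 \<le> i\<close> by auto
    then have "r \<le> n" using assms(4,5) by (meson dvd_imp_le le_trans less_le_trans zero_less_one)
    then have "n div r \<ge> 1" using \<open>r > 0\<close> by (simp add: Suc_le_eq div_greater_zero_iff)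
    have "{j\<in>{1..k}. q dvd a j} = {j\<in>{0<..k}. q dvd a j}" by auto
    then have "card {j\<in>{1..k}. q dvd a j} = k div r - 0 div r"
      using count[of 0 k] by simp
    also have "\<dots> = 0" using 3 by simp
    finally have c0: "card {j\<in>{1..k}. q dvd a j} = 0" .
    have cw: "card {j\<in>{n-k<..n}. q dvd a j} = n div r - (n - k) div r"
      using count \<open>k \<le> n\<close> by simp
    have "(n - k) div r = 0" using 3 assms(2) by simp
    then show ?thesis unfolding c0 cw using \<open>n div r \<ge> 1\<close> by simp
  qed (use le in auto)
qed

lemma size_filter_image_mset_mset_set:
  "finite A \<Longrightarrow> size {#z \<in># image_mset f (mset_set A). P z#} = card {x\<in>A. P (f x)}"
  by (simp add: filter_mset_image_mset)

lemma a_binom_mult_prod: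
  assumes sds: "strong_divisibility_seq a" and "k \<le> n"
  shows "a_binom a n k * (\<Prod>j\<in>{1..k}. a j) = (\<Prod>j\<in>{n-k<..n}. a j)"
proof -
  have "(\<Prod>j\<in>{1..k}. a j) dvd (\<Prod>j\<in>{n-k<..n}. a j)"
    unfolding prod_unfold_prod_mset
  proof (rule prod_mset_dvd_if_count_prime_power_dvd_le)
    show "0 \<notin># image_mset a (mset_set {1..k})" "0 \<notin># image_mset a (mset_set {n-k<..n})"
      by (auto simp: strong_divisibility_seq_nonzero[OF sds])
  qed (simp only: size_filter_image_mset_mset_set finite_atLeastAtMost finite_greaterThanAtMost
      strong_divisibility_seq_count_dvd_le[OF assms])
  then show ?thesis
    unfolding a_binom_def by simp
qed

lemma dvd_a_binom_mult_Lcm: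
  assumes sds: "strong_divisibility_seq a" and nk: "n \<le> 2 * k" "k \<le> n" and i: "1 \<le> i" "i \<le> n"
  shows "a i dvd a_binom a n k * Lcm (a ` {1..k})"
proof -
  let ?L = "Lcm (a ` {1..k})" and ?P = "\<Prod>j\<in>{1..k}. a j"
  have "?L \<noteq> 0" "?P \<noteq> 0" "a i \<noteq> 0"
    using i by (auto simp: Lcm_0_iff strong_divisibility_seq_nonzero[OF sds])
  have "a i * ?P dvd ?L * (\<Prod>j\<in>{n-k<..n}. a j)"
    unfolding prod_unfold_prod_mset prod_mset.add_mset[symmetric]
  proof (rule prod_mset_dvd_if_count_prime_power_dvd_le)
    show "0 \<notin># add_mset (a i) (image_mset a (mset_set {1..k}))"
      "0 \<notin># add_mset ?L (image_mset a (mset_set {n-k<..n}))"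
      using \<open>a i \<noteq> 0\<close> \<open>?L \<noteq> 0\<close> by (auto simp: strong_divisibility_seq_nonzero[OF sds])
  next
    fix p e :: nat
    have "size {#z \<in># add_mset (a i) (image_mset a (mset_set {1..k})). p ^ e dvd z#}
        = (if p ^ e dvd a i then 1 else 0) + card {j\<in>{1..k}. p ^ e dvd a j}"
      by (simp add: size_filter_image_mset_mset_set)
    moreover have "size {#z \<in># add_mset ?L (image_mset a (mset_set {n-k<..n})). p ^ e dvd z#}
        = card {j\<in>{n-k<..n}. p ^ e dvd a j} + (if p ^ e dvd ?L then 1 else 0)"
      by (simp add: size_filter_image_mset_mset_set)
    ultimately show "size {#z \<in># add_mset (a i) (image_mset a (mset_set {1..k})). p ^ e dvd z#}
        \<le> size {#z \<in># add_mset ?L (image_mset a (mset_set {n-k<..n})). p ^ e dvd z#}"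
      using strong_divisibility_seq_count_dvd_le_Lcm[OF sds nk i, of "p ^ e"] by linarith
  qed
  also have "?L * (\<Prod>j\<in>{n-k<..n}. a j) = (a_binom a n k * ?L) * ?P"
    by (metis a_binom_mult_prod[OF sds nk(2)] mult.assoc mult.commute)
  finally have "a i * ?P dvd (a_binom a n k * ?L) * ?P" .
  then show ?thesis
    using dvd_times_right_cancel_iff[OF \<open>?P \<noteq> 0\<close>] by blast
qed

theorem corollary2:
  fixes a :: "nat \<Rightarrow> nat" and n :: nat
  assumes "strong_divisibility_seq a" and "n \<ge> 1"
  shows "Lcm (a ` {1..n}) =
         Gcd {a_binom a n k * Lcm (a ` {1..k}) | k. n \<le> 2 * k \<and> k \<le> n}"
proof (rule dvd_antisym)
  have "a_binom a n n = 1"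
    using a_binom_mult_prod[OF assms(1), of n n]
    by (simp add: atLeastSucAtMost_greaterThanAtMost strong_divisibility_seq_nonzero[OF assms(1)])
  then show "Gcd {a_binom a n k * Lcm (a ` {1..k}) | k. n \<le> 2 * k \<and> k \<le> n} dvd Lcm (a ` {1..n})"
    by (intro Gcd_dvd) force
  show "Lcm (a ` {1..n}) dvd Gcd {a_binom a n k * Lcm (a ` {1..k}) | k. n \<le> 2 * k \<and> k \<le> n}"
    using dvd_a_binom_mult_Lcm[OF assms(1)] by (auto intro!: Gcd_greatest Lcm_least)
qed

end
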